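(* Let $d\ge 2$ be an integer and $\delta\in(0,d]$ real. Let $P$ be a set of $n$ points in $\mathbb{R}^d$ with $\dim_{\mathsf f}(P)=\delta$, and let $W$ be the set of edges (straight segments) of any optimal Euclidean traveling salesman tour of $P$. Then there exists a $(d-1)$-sphere $C$ such that at most $(1-2^{-O(d)})n$ points of $P$ lie in the interior of $C$, at most $(1-2^{-O(d)})n$ points of $P$ lie outside $C$, and $W_C=\{w\in W: w\cap C\neq\emptyset\}$ satisfies $$|W_C|=\begin{cases}O(n^{1-1/\delta}) & \delta>1,\\ O(\log n) & \delta=1,\\ O\!\left(\frac{1}{2^{1-\delta}-1}\right) & \delta<1.\end{cases}$$
   Context: Fractal dimension: for a family of finite pointsets $P\subseteq\mathbb{R}^d$ (with $|P|$ unbounded), $\dim_{\mathsf f}(P)$ is the infimum of $\delta$ such that there is a constant $c$ with: for every member $P$, every $\varepsilon>0$, every $r\ge2\varepsilon$, every $\varepsilon$-net $N$ of $P$ (a subset of $P$ whose points are pairwise at distance $\ge\varepsilon$ and such that every point of $P$ is within distance $\varepsilon$ of $N$) and every $x\in\mathbb{R}^d$, $|N\cap\mathrm{ball}(x,r)|\le c(r/\varepsilon)^\delta$, where $\mathrm{ball}(x,r)$ is the closed Euclidean ball. Asymptotic notation is as $n\to\infty$; hidden constants may depend on $d$, $\delta$, $c$. *)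

theory Defs
  imports "HOL-Analysis.Analysis"
begin

definition eps_net :: "'a::euclidean_space set \<Rightarrow> 'a set \<Rightarrow> real \<Rightarrow> bool" where
  "eps_net N P eps \<longleftrightarrow> N \<subseteq> P
     \<and> (\<forall>p\<in>N. \<forall>q\<in>N. p \<noteq> q \<longrightarrow> dist p q \<ge> eps)
     \<and> (\<forall>p\<in>P. \<exists>q\<in>N. dist p q \<le> eps)"

text \<open>The packing condition defining fractal dimension, with exponent delta and constant c.\<close>
definition fractal_bound :: "real \<Rightarrow> real \<Rightarrow> 'a::euclidean_space set \<Rightarrow> bool" where
  "fractal_bound delta c P \<longleftrightarrow>
     (\<forall>eps r N x. eps > 0 \<longrightarrow> r \<ge> 2 * eps \<longrightarrow> eps_net N P eps \<longrightarrow>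
        real (card (N \<inter> cball x r)) \<le> c * (r / eps) powr delta)"

definition tsp_tour :: "'a::euclidean_space set \<Rightarrow> 'a list \<Rightarrow> bool" where
  "tsp_tour P xs \<longleftrightarrow> distinct xs \<and> set xs = P"

definition tour_length :: "'a::euclidean_space list \<Rightarrow> real" where
  "tour_length xs = (\<Sum>i<length xs. dist (xs ! i) (xs ! (Suc i mod length xs)))"

definition optimal_tour :: "'a::euclidean_space set \<Rightarrow> 'a list \<Rightarrow> bool" where
  "optimal_tour P xs \<longleftrightarrow> tsp_tour P xs \<and>
     (\<forall>ys. tsp_tour P ys \<longrightarrow> tour_length xs \<le> tour_length ys)"

definition tour_edge :: "'a::euclidean_space list \<Rightarrow> nat \<Rightarrow> 'a set" where
  "tour_edge xs i = closed_segment (xs ! i) (xs ! (Suc i mod length xs))"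

definition sep_bound :: "real \<Rightarrow> nat \<Rightarrow> real" where
  "sep_bound delta n =
     (if delta > 1 then real n powr (1 - 1 / delta)
      else if delta = 1 then ln (real n)
      else 1 / (2 powr (1 - delta) - 1))"

end

theory Submission
  imports Defs
begin

text \<open>
  First find a ball B(z, R) holding a 1/K fraction of P whose double holds at most half of P: the
  smallest ball with about n/K points works, because by the packing condition its double is
  covered by boundedly many half-size balls, each lighter than it. Every sphere of radius between
  R and 2R then separates P in a balanced way. Among n concentric such spheres, an edge of length
  l < R near z meets about l n / R + 1 of them, so some sphere meets at most about
  (number of long edges) + sum over short edges of l / R + 1. Long edges near z are boundedly
  many because two edges of an optimal tour cannot run close and parallel (2-opt). Grouping the
  short edges by dyadic scale, at scale R / 2^j there are O(2^(j delta)) of them by the packing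
  condition and trivially at most n, each contributing at most 2^(-j); summing gives
  n^(1 - 1/delta), log n or a constant.
\<close>

fun path_length :: "'a::euclidean_space list \<Rightarrow> real" where
  "path_length (a # b # rest) = dist a b + path_length (b # rest)"
| "path_length _ = 0"

lemma path_length_append:
  "path_length (xs @ y # ys) = path_length (xs @ [y]) + path_length (y # ys)"
  by (induction xs rule: path_length.induct) (auto simp: Cons_eq_append_conv)

lemma path_length_rev: "path_length (rev xs) = path_length xs"
proof (induction xs rule: path_length.induct)
  case (1 a b rest)
  have "path_length (rev (a # b # rest)) = path_length (rev rest @ [b]) + path_length [b, a]"
    using path_length_append[of "rev rest" b "[a]"] by simp
  then show ?case using 1 by (simp add: dist_commute)
qed auto

lemma path_length_snoc:
  "path_length (xs @ [w]) = path_length xs + (if xs = [] then 0 else dist (last xs) w)"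
proof (cases xs rule: rev_cases)
  case (snoc ys y)
  then show ?thesis using path_length_append[of ys y "[w]"] by simp
qed simp

lemma path_length_conv_sum:
  "path_length xs = (\<Sum>i<length xs - 1. dist (xs ! i) (xs ! Suc i))"
proof (induction xs rule: path_length.induct)
  case (1 a b rest)
  then show ?case by (simp add: sum.lessThan_Suc_shift del: sum.lessThan_Suc)
qed auto

lemma tour_length_conv_path_length:
  assumes "xs \<noteq> []"
  shows "tour_length xs = path_length (xs @ [xs ! 0])"
proof -
  let ?n = "length xs" and ?L = "xs @ [xs ! 0]"
  have "dist (?L ! i) (?L ! Suc i) = dist (xs ! i) (xs ! (Suc i mod ?n))" if "i < ?n" for i
    using that by (cases "Suc i = ?n") (auto simp: nth_append)
  then show ?thesis
    unfolding tour_length_def path_length_conv_sum by (intro sum.cong) auto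
qed

lemma path_length_splice:
  assumes "N \<noteq> []"
  shows "path_length (A @ [u] @ N @ [w] @ C)
       = path_length (A @ [u]) + dist u (hd N) + path_length N + dist (last N) w + path_length (w # C)"
proof -
  obtain m ms where N: "N = m # ms" using assms by (cases N) auto
  have "path_length (A @ [u] @ N @ [w] @ C) = path_length (A @ [u]) + path_length (u # N @ [w] @ C)"
    using path_length_append[of A u "N @ [w] @ C"] by simp
  also have "path_length (u # N @ [w] @ C) = dist u (hd N) + path_length (N @ [w]) + path_length (w # C)"
    using N path_length_append[of N w C] by simp
  finally show ?thesis using assms by (simp add: path_length_snoc)
qed

lemma closed_walk_segment_split:
  assumes ij: "i < j" "j < length xs"
  defines "M \<equiv> take (j - i) (drop (Suc i) xs)" and "j' \<equiv> Suc j mod length xs"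
  obtains A C where "xs = take (Suc i) xs @ M @ drop (Suc j) xs"
    "take (Suc i) xs = A @ [xs ! i]" "drop (Suc j) xs @ [xs ! 0] = [xs ! j'] @ C"
proof -
  let ?L = "xs @ [xs ! 0]"
  define A where "A = take i ?L"
  define C where "C = drop (Suc (Suc j)) ?L"
  have "xs = take (Suc i) xs @ M @ drop (Suc j) xs" unfolding M_def using ij
    by (metis Suc_leI append.assoc append_take_drop_id drop_drop le_add_diff_inverse2 less_imp_le_nat
        take_add plus_1_eq_Suc add.commute add_Suc_right Suc_diff_le)
  moreover have "take (Suc i) xs = A @ [xs ! i]"
    unfolding A_def using ij by (simp add: take_Suc_conv_app_nth)
  moreover have "drop (Suc j) xs @ [xs ! 0] = [xs ! j'] @ C"
  proof -
    have "drop (Suc j) xs @ [xs ! 0] = drop (Suc j) ?L" using ij by simp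
    also have "\<dots> = ?L ! Suc j # C" unfolding C_def by (rule Cons_nth_drop_Suc[symmetric]) (use ij in simp)
    also have "?L ! Suc j = xs ! j'"
      unfolding j'_def using ij by (cases "Suc j = length xs") (auto simp: nth_append)
    finally show ?thesis by simp
  qed
  ultimately show ?thesis using that by blast
qed

text \<open>Reversing the stretch between two edges of an optimal tour cannot shorten it.\<close>
lemma optimal_tour_two_opt:
  assumes opt: "optimal_tour P xs" and ij: "i < j" "j < length xs"
  defines "i' \<equiv> Suc i mod length xs" and "j' \<equiv> Suc j mod length xs"
  shows "dist (xs ! i) (xs ! i') + dist (xs ! j) (xs ! j')
       \<le> dist (xs ! i) (xs ! j) + dist (xs ! i') (xs ! j')"
proof -
  define M where "M = take (j - i) (drop (Suc i) xs)"
  define ys where "ys = take (Suc i) xs @ rev M @ drop (Suc j) xs"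
  obtain A C where xs_split: "xs = take (Suc i) xs @ M @ drop (Suc j) xs"
    and take_i: "take (Suc i) xs = A @ [xs ! i]" and drop_j: "drop (Suc j) xs @ [xs ! 0] = [xs ! j'] @ C"
    using closed_walk_segment_split[OF ij] unfolding M_def j'_def by blast
  have i': "i' = Suc i" unfolding i'_def using ij by simp
  have Mne: "M \<noteq> []" and hdM: "hd M = xs ! Suc i" and lastM: "last M = xs ! j"
    unfolding M_def using ij by (simp_all add: hd_take hd_drop_conv_nth last_conv_nth)
  have "xs @ [xs ! 0] = take (Suc i) xs @ M @ (drop (Suc j) xs @ [xs ! 0])"
    using arg_cong[OF xs_split, of "\<lambda>ys. ys @ [xs ! 0]"] by simp
  then have xs_L: "xs @ [xs ! 0] = A @ [xs ! i] @ M @ [xs ! j'] @ C"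
    unfolding take_i drop_j by simp
  have "ys ! 0 = xs ! 0" unfolding ys_def using ij by (simp add: nth_append)
  then have ys_L: "ys @ [ys ! 0] = A @ [xs ! i] @ rev M @ [xs ! j'] @ C"
    using drop_j take_i unfolding ys_def by simp
  have "tsp_tour P ys"
    using opt xs_split unfolding optimal_tour_def tsp_tour_def ys_def
    by (metis distinct_append set_append set_rev distinct_rev)
  then have "tour_length xs \<le> tour_length ys" using opt by (simp add: optimal_tour_def)
  moreover have "xs \<noteq> []" "ys \<noteq> []" unfolding ys_def using ij by auto
  ultimately have "path_length (A @ [xs ! i] @ M @ [xs ! j'] @ C)
                 \<le> path_length (A @ [xs ! i] @ rev M @ [xs ! j'] @ C)"
    using xs_L ys_L by (simp add: tour_length_conv_path_length)
  moreover have "hd (rev M) = xs ! j" "last (rev M) = xs ! Suc i"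
    using Mne hdM lastM by (simp_all add: hd_rev last_rev)
  ultimately show ?thesis
    using path_length_splice[OF Mne, of A "xs ! i" "xs ! j'" C] Mne
      path_length_splice[of "rev M" A "xs ! i" "xs ! j'" C] hdM lastM i'
    by (simp add: path_length_rev)
qed

definition edge_length :: "'a::euclidean_space list \<Rightarrow> nat \<Rightarrow> real" where
  "edge_length xs i = dist (xs ! i) (xs ! (Suc i mod length xs))"

lemma uniform_cball_cover:
  fixes t :: real assumes t: "t > 0"
  obtains K :: nat where "\<And>(z::'a::euclidean_space) r. r > 0 \<Longrightarrow>
     \<exists>F. finite F \<and> card F \<le> K \<and> cball z r \<subseteq> (\<Union>f\<in>F. cball f (t * r))"
proof -
  have "cball (0::'a) 1 \<subseteq> (\<Union>x\<in>UNIV. ball x t)"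
    using t by (meson UNIV_I UN_I centre_in_ball subsetI)
  then obtain C where C: "finite C" "cball (0::'a) 1 \<subseteq> (\<Union>x\<in>C. ball x t)"
    using compactE_image[of "cball (0::'a) 1" UNIV "\<lambda>x. ball x t"] by auto
  have "cball z r \<subseteq> (\<Union>f\<in>(\<lambda>x. z + r *\<^sub>R x) ` C. cball f (t * r))" if r: "r > 0" for z :: 'a and r
  proof
    fix y assume y: "y \<in> cball z r"
    define u where "u = (1 / r) *\<^sub>R (y - z)"
    have "norm u \<le> 1" unfolding u_def using r y by (simp add: dist_norm norm_minus_commute)
    with C obtain x where x: "x \<in> C" "dist x u < t" by auto
    have "z + r *\<^sub>R x - y = r *\<^sub>R (x - u)" unfolding u_def using r by (simp add: algebra_simps)
    then have "dist (z + r *\<^sub>R x) y = r * dist x u" using r by (simp add: dist_norm)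
    also have "\<dots> \<le> t * r" using x r by (simp add: mult.commute)
    finally show "y \<in> (\<Union>f\<in>(\<lambda>x. z + r *\<^sub>R x) ` C. cball f (t * r))" using x by auto
  qed
  then show ?thesis
    using that[of "card C"] C(1) card_image_le[OF C(1)] by (metis finite_imageI)
qed

lemma eps_net_exists:
  fixes P :: "'a::euclidean_space set"
  assumes fin: "finite P" and eps: "eps > 0"
  shows "\<exists>N. eps_net N P eps"
proof -
  define S where "S = {N. N \<subseteq> P \<and> (\<forall>p\<in>N. \<forall>q\<in>N. p \<noteq> q \<longrightarrow> dist p q \<ge> eps)}"
  have finS: "finite S" and "{} \<in> S" unfolding S_def using fin by simp_all
  then have "Max (card ` S) \<in> card ` S" by (intro Max_in) auto
  then obtain N where N: "N \<in> S" and "card N = Max (card ` S)" by auto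
  then have max: "\<And>N'. N' \<in> S \<Longrightarrow> card N' \<le> card N" using finS by simp
  have finN: "finite N" using N fin unfolding S_def by (auto intro: finite_subset)
  have "\<exists>q\<in>N. dist p q \<le> eps" if p: "p \<in> P" for p
  proof (rule ccontr)
    assume "\<not> ?thesis"
    then have far: "\<And>q. q \<in> N \<Longrightarrow> dist p q > eps" by (auto simp: not_le)
    then have "p \<notin> N" using eps by force
    moreover have "insert p N \<in> S" using N p far unfolding S_def
      by (auto simp: dist_commute less_imp_le)
    ultimately show False using max[of "insert p N"] finN by simp
  qed
  then show ?thesis using N unfolding eps_net_def S_def by auto
qed

lemma segment_cut_near_point:
  fixes p x z :: "'a::euclidean_space"
  assumes xz: "dist z x \<le> r" and r: "r > 0"
  obtains a where "between (p, x) a" "dist z a \<le> 2 * r" "a = p \<or> dist a x = r"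
proof (cases "dist z p \<le> 2 * r")
  case True then show ?thesis using that[of p] by simp
next
  case False
  then have d: "dist x p > r" using dist_triangle[of z p x] xz by linarith
  define u where "u = r / dist x p"
  have u: "0 \<le> u" "u \<le> 1" unfolding u_def using d r by (auto simp: divide_le_eq_1)
  define a where "a = x + u *\<^sub>R (p - x)"
  have "a \<in> closed_segment x p"
    unfolding a_def closed_segment_def using u by (auto intro!: exI[of _ u] simp: algebra_simps)
  then have "between (p, x) a" by (simp add: between_mem_segment closed_segment_commute)
  moreover have ax: "dist a x = r"
  proof -
    have "dist a x = u * dist x p" unfolding a_def using u by (simp add: dist_norm norm_minus_commute)
    moreover have "x \<noteq> p" using d r by auto
    ultimately show ?thesis unfolding u_def using d by simp
  qed
  moreover have "dist z a \<le> 2 * r" using dist_triangle[of z a x] xz ax by (simp add: dist_commute)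
  ultimately show ?thesis using that by blast
qed

lemma segment_subsegment_near_point:
  fixes p q x z :: "'a::euclidean_space"
  assumes x: "x \<in> closed_segment p q" and xz: "dist z x \<le> r" and pq: "dist p q \<ge> r" and r: "r > 0"
  obtains a b where "dist z a \<le> 2 * r" "dist z b \<le> 2 * r"
    "dist p a + dist a b + dist b q = dist p q" "dist a b \<ge> r"
proof -
  obtain a where a: "between (p, x) a" "dist z a \<le> 2 * r" "a = p \<or> dist a x = r"
    using segment_cut_near_point[OF xz r] by blast
  obtain b where b: "between (q, x) b" "dist z b \<le> 2 * r" "b = q \<or> dist b x = r"
    using segment_cut_near_point[OF xz r] by blast
  have "dist p x = dist p a + dist a x" "dist q x = dist q b + dist b x"
    using a(1) b(1) by (simp_all add: between)
  moreover have "dist p q = dist p x + dist x q"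
    using x by (simp add: between_mem_segment[symmetric] between)
  moreover have "dist p q \<le> dist p a + dist a b + dist b q"
    using dist_triangle[of p q a] dist_triangle[of a q b] by linarith
  moreover have "dist a b \<le> dist a x + dist x b" by (rule dist_triangle)
  ultimately have "dist a b = dist a x + dist x b" "dist p a + dist a b + dist b q = dist p q"
    by (simp_all add: dist_commute)
  moreover have "dist a b \<ge> r"
    using a(3) b(3) pq \<open>dist a b = dist a x + dist x b\<close> by (auto simp: dist_commute)
  ultimately show ?thesis using that a(2) b(2) by blast
qed

text \<open>Two edges of an optimal tour cannot both contain long pieces that run close to each other
  in parallel: exchanging the edges would shorten the tour.\<close>
lemma optimal_tour_no_parallel_subsegments:
  fixes xs :: "'a::euclidean_space list"
  assumes opt: "optimal_tour P xs" and ij: "i < j" "j < length xs"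
    and e1: "dist (xs ! i) a1 + dist a1 b1 + dist b1 (xs ! (Suc i mod length xs)) = edge_length xs i"
    and e2: "dist (xs ! j) a2 + dist a2 b2 + dist b2 (xs ! (Suc j mod length xs)) = edge_length xs j"
    and l1: "dist a1 b1 \<ge> r" and l2: "dist a2 b2 \<ge> r"
  shows "dist a1 a2 + dist b1 b2 \<ge> 2 * r"
proof -
  let ?p1 = "xs ! i" and ?q1 = "xs ! (Suc i mod length xs)"
  let ?p2 = "xs ! j" and ?q2 = "xs ! (Suc j mod length xs)"
  have "dist ?p1 ?p2 \<le> dist ?p1 a1 + dist a1 a2 + dist ?p2 a2"
    using dist_triangle[of ?p1 ?p2 a1] dist_triangle[of a1 ?p2 a2] by (simp add: dist_commute)
  moreover have "dist ?q1 ?q2 \<le> dist b1 ?q1 + dist b1 b2 + dist b2 ?q2"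
    using dist_triangle[of ?q1 ?q2 b1] dist_triangle[of b1 ?q2 b2] by (simp add: dist_commute)
  ultimately show ?thesis
    using optimal_tour_two_opt[OF opt ij] e1 e2 l1 l2 unfolding edge_length_def by linarith
qed

text \<open>Each long edge meeting cball z r contains a piece of length at least r with both ends
  within 2r of z. Recording the cells of a cover by (2r/5)-balls that contain the two ends is
  injective, since two edges with the same pair of cells would run in parallel.\<close>
lemma optimal_tour_long_edges_near_ball_card:
  fixes xs :: "'a::euclidean_space list" and z :: 'a
  assumes opt: "optimal_tour P xs" and r: "r > 0"
    and F: "finite F" "cball z (2 * r) \<subseteq> (\<Union>f\<in>F. cball f (2 * r / 5))"
  shows "card {i. i < length xs \<and> edge_length xs i > 5 * r \<and> tour_edge xs i \<inter> cball z r \<noteq> {}}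
    \<le> card F * card F"
proof -
  let ?q = "\<lambda>i. xs ! (Suc i mod length xs)"
  define I where "I = {i. i < length xs \<and> edge_length xs i > 5 * r \<and> tour_edge xs i \<inter> cball z r \<noteq> {}}"
  have "\<exists>a b. dist z a \<le> 2 * r \<and> dist z b \<le> 2 * r \<and> dist a b \<ge> r
          \<and> dist (xs ! i) a + dist a b + dist b (?q i) = edge_length xs i" if "i \<in> I" for i
  proof -
    obtain x where "x \<in> closed_segment (xs ! i) (?q i)" "dist z x \<le> r"
      using \<open>i \<in> I\<close> unfolding I_def tour_edge_def by auto
    moreover have "dist (xs ! i) (?q i) \<ge> r" using \<open>i \<in> I\<close> r unfolding I_def edge_length_def by auto
    ultimately show ?thesis
      using segment_subsegment_near_point[OF _ _ _ r] unfolding edge_length_def by metis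
  qed
  then obtain a b where ab: "\<And>i. i \<in> I \<Longrightarrow> dist z (a i) \<le> 2 * r \<and> dist z (b i) \<le> 2 * r
      \<and> dist (a i) (b i) \<ge> r \<and> dist (xs ! i) (a i) + dist (a i) (b i) + dist (b i) (?q i) = edge_length xs i"
    by metis
  have "\<exists>f\<in>F. dist f y \<le> 2 * r / 5" if "dist z y \<le> 2 * r" for y
    using F(2) that by fastforce
  then have "\<forall>i\<in>I. \<exists>f. (fst f \<in> F \<and> dist (fst f) (a i) \<le> 2 * r / 5)
      \<and> (snd f \<in> F \<and> dist (snd f) (b i) \<le> 2 * r / 5)"
    using ab by (metis fst_conv snd_conv)
  then obtain f where f: "\<And>i. i \<in> I \<Longrightarrow> fst (f i) \<in> F \<and> dist (fst (f i)) (a i) \<le> 2 * r / 5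
      \<and> snd (f i) \<in> F \<and> dist (snd (f i)) (b i) \<le> 2 * r / 5"
    by metis
  have no_collision: False if "i \<in> I" "j \<in> I" "i < j" "f i = f j" for i j
  proof -
    have "dist (a i) (a j) \<le> 4 * r / 5" "dist (b i) (b j) \<le> 4 * r / 5"
      using f[OF that(1)] f[OF that(2)] that(4)
        dist_triangle2[of "a i" "a j" "fst (f i)"] dist_triangle2[of "b i" "b j" "snd (f i)"]
      by (simp_all add: dist_commute)
    moreover have "j < length xs" using that(2) unfolding I_def by simp
    ultimately show False
      using optimal_tour_no_parallel_subsegments[OF opt that(3), of "a i" "b i" "a j" "b j" r]
        ab[OF that(1)] ab[OF that(2)] r
      by linarith
  qed
  have "inj_on f I"
  proof (rule inj_onI)
    fix i j assume "i \<in> I" "j \<in> I" "f i = f j"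
    then show "i = j" using no_collision[of i j] no_collision[of j i]
      by (cases i j rule: linorder_cases) auto
  qed
  then have "card I = card (f ` I)" by (simp add: card_image)
  also have "\<dots> \<le> card (F \<times> F)"
    using f F(1) by (intro card_mono) (auto intro!: image_subsetI simp: mem_Times_iff)
  also have "\<dots> = card F * card F" by (simp add: card_cartesian_product)
  finally show ?thesis unfolding I_def .
qed

lemma optimal_tour_long_edges_near_ball:
  obtains K :: nat where "\<And>(P::'a::euclidean_space set) xs z r. optimal_tour P xs \<Longrightarrow> r > 0 \<Longrightarrow>
    card {i. i < length xs \<and> edge_length xs i > 5 * r \<and> tour_edge xs i \<inter> cball z r \<noteq> {}} \<le> K"
proof -
  obtain K :: nat where K: "\<And>(z::'a) r. r > 0 \<Longrightarrow>
     \<exists>F. finite F \<and> card F \<le> K \<and> cball z r \<subseteq> (\<Union>f\<in>F. cball f ((1/5) * r))"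
    using uniform_cball_cover[of "1/5"] by auto
  have "card {i. i < length xs \<and> edge_length xs i > 5 * r \<and> tour_edge xs i \<inter> cball z r \<noteq> {}} \<le> K * K"
    if opt: "optimal_tour P xs" and r: "r > 0" for P :: "'a set" and xs z r
  proof -
    obtain F where F: "finite F" "card F \<le> K" "cball z (2 * r) \<subseteq> (\<Union>f\<in>F. cball f (2 * r / 5))"
      using K[of "2 * r" z] r by auto
    then show ?thesis
      using optimal_tour_long_edges_near_ball_card[OF opt r F(1,3)] mult_le_mono[OF F(2) F(2)] by linarith
  qed
  then show ?thesis using that by blast
qed

lemma fractal_boundD:
  assumes "fractal_bound delta c P" "eps > 0" "r \<ge> 2 * eps" "eps_net N P eps"
  shows "real (card (N \<inter> cball x r)) \<le> c * (r / eps) powr delta"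
  using assms unfolding fractal_bound_def by blast

lemma cball_inter_shrink_to_farthest:
  fixes P :: "'a::metric_space set"
  assumes fin: "finite P" and ne: "P \<inter> cball q r \<noteq> {}"
  obtains s where "s \<in> P \<inter> cball q r" "P \<inter> cball q (dist q s) = P \<inter> cball q r"
proof -
  have finB: "finite (P \<inter> cball q r)" using fin by simp
  then obtain s where s: "s \<in> P \<inter> cball q r" "Max (dist q ` (P \<inter> cball q r)) = dist q s"
    using obtains_MAX[of "P \<inter> cball q r" "dist q"] ne by blast
  then have "dist q s' \<le> dist q s" if "s' \<in> P \<inter> cball q r" for s'
    using finB that by (metis Max_ge finite_imageI imageI)
  then have "P \<inter> cball q (dist q s) = P \<inter> cball q r" using s(1) by auto
  then show ?thesis using s(1) that by blast
qed

text \<open>Candidate radii are distances between points of P, so a smallest heavy radius exists.\<close>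
lemma smallest_heavy_ball:
  fixes P :: "'a::euclidean_space set"
  assumes fin: "finite P" and k: "2 \<le> k" "k \<le> card P"
  obtains z R where "z \<in> P" "R > 0" "card (P \<inter> cball z R) \<ge> k"
    "\<And>q r. q \<in> P \<Longrightarrow> r < R \<Longrightarrow> card (P \<inter> cball q r) < k"
proof -
  define G where "G = {dist q s | q s. q \<in> P \<and> s \<in> P \<and> k \<le> card (P \<inter> cball q (dist q s))}"
  have "G \<subseteq> case_prod dist ` (P \<times> P)" unfolding G_def by auto
  then have finG: "finite G" using fin by (auto intro: finite_subset)
  have G_iff: "(\<exists>R'\<in>G. R' \<le> r) \<longleftrightarrow> (\<exists>q\<in>P. k \<le> card (P \<inter> cball q r))" for r
  proof
    assume "\<exists>R'\<in>G. R' \<le> r"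
    then obtain q s where "q \<in> P" "k \<le> card (P \<inter> cball q (dist q s))" "dist q s \<le> r"
      unfolding G_def by auto
    moreover have "card (P \<inter> cball q (dist q s)) \<le> card (P \<inter> cball q r)"
      using fin \<open>dist q s \<le> r\<close> by (intro card_mono) auto
    ultimately show "\<exists>q\<in>P. k \<le> card (P \<inter> cball q r)" by force
  next
    assume "\<exists>q\<in>P. k \<le> card (P \<inter> cball q r)"
    then obtain q where q: "q \<in> P" "k \<le> card (P \<inter> cball q r)" by blast
    then have "P \<inter> cball q r \<noteq> {}" using k by (metis card.empty not_numeral_le_zero order_trans)
    then obtain s where "s \<in> P \<inter> cball q r" "P \<inter> cball q (dist q s) = P \<inter> cball q r"
      using cball_inter_shrink_to_farthest[OF fin] by blast
    then show "\<exists>R'\<in>G. R' \<le> r" unfolding G_def using q by force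
  qed
  obtain p0 where p0: "p0 \<in> P" using k by fastforce
  have "P \<subseteq> cball p0 (diameter P)"
    using fin p0 by (auto intro!: diameter_bounded_bound finite_imp_bounded)
  then have "P \<inter> cball p0 (diameter P) = P" by blast
  then have "\<exists>q\<in>P. k \<le> card (P \<inter> cball q (diameter P))" using p0 k by (intro bexI[of _ p0]) simp_all
  then have "G \<noteq> {}" using G_iff by blast
  define R where "R = Min G"
  have "R \<in> G" unfolding R_def using finG \<open>G \<noteq> {}\<close> by (rule Min_in)
  then obtain z where z: "z \<in> P" "k \<le> card (P \<inter> cball z R)" using G_iff[of R] by blast
  have light: "card (P \<inter> cball q r) < k" if "q \<in> P" "r < R" for q r
    using G_iff[of r] that finG unfolding R_def by (metis Min_le not_le order.trans linorder_not_less)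
  have "R \<noteq> 0"
  proof
    assume "R = 0"
    then have "P \<inter> cball z R = {z}" using z by auto
    then show False using z k by simp
  qed
  moreover have "R \<ge> 0" using \<open>R \<in> G\<close> unfolding G_def by auto
  ultimately have "R > 0" by simp
  then show ?thesis using that z light by blast
qed

lemma card_cball_le_net_count:
  fixes P :: "'a::euclidean_space set"
  assumes fin: "finite P" and net: "eps_net N P eps"
    and light: "\<And>q. q \<in> P \<Longrightarrow> card (P \<inter> cball q eps) \<le> m"
  shows "card (P \<inter> cball z r) \<le> card (N \<inter> cball z (r + eps)) * m"
proof -
  define Q where "Q = N \<inter> cball z (r + eps)"
  have NP: "N \<subseteq> P" using net unfolding eps_net_def by simp
  have finQ: "finite Q" unfolding Q_def using NP fin by (auto intro: finite_subset)
  have "P \<inter> cball z r \<subseteq> (\<Union>q\<in>Q. P \<inter> cball q eps)"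
  proof
    fix p assume p: "p \<in> P \<inter> cball z r"
    then obtain q where q: "q \<in> N" "dist p q \<le> eps" using net unfolding eps_net_def by blast
    then have "q \<in> Q" unfolding Q_def using p dist_triangle[of z q p] by (auto simp: dist_commute)
    then show "p \<in> (\<Union>q\<in>Q. P \<inter> cball q eps)" using p q by (auto simp: dist_commute)
  qed
  then have "card (P \<inter> cball z r) \<le> card (\<Union>q\<in>Q. P \<inter> cball q eps)"
    using fin by (intro card_mono) auto
  also have "\<dots> \<le> (\<Sum>q\<in>Q. card (P \<inter> cball q eps))" by (rule card_UN_le[OF finQ])
  also have "\<dots> \<le> card Q * m" using light NP sum_bounded_above[of Q "\<lambda>q. card (P \<inter> cball q eps)" m]
    unfolding Q_def by auto
  finally show ?thesis unfolding Q_def .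
qed

lemma doubled_ball_count_le:
  fixes P :: "'a::euclidean_space set"
  assumes fin: "finite P" and fb: "fractal_bound delta c P" and R: "R > 0"
    and light: "\<And>q. q \<in> P \<Longrightarrow> card (P \<inter> cball q (R / 2)) \<le> m"
  shows "real (card (P \<inter> cball z (2 * R))) \<le> max c 1 * 5 powr delta * real m"
proof -
  obtain N where N: "eps_net N P (R / 2)" using eps_net_exists[OF fin, of "R / 2"] R by auto
  have "real (card (N \<inter> cball z (5 * R / 2))) \<le> c * ((5 * R / 2) / (R / 2)) powr delta"
    using R by (intro fractal_boundD[OF fb _ _ N]) auto
  also have "(5 * R / 2) / (R / 2) = 5" using R by simp
  also have "c * 5 powr delta \<le> max c 1 * 5 powr delta" by (simp add: mult_right_mono)
  finally have net_count: "real (card (N \<inter> cball z (5 * R / 2))) \<le> max c 1 * 5 powr delta" .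
  have "card (P \<inter> cball z (2 * R)) \<le> card (N \<inter> cball z (2 * R + R / 2)) * m"
    by (rule card_cball_le_net_count[OF fin N light])
  moreover have "2 * R + R / 2 = 5 * R / 2" by simp
  ultimately have "real (card (P \<inter> cball z (2 * R))) \<le> real (card (N \<inter> cball z (5 * R / 2))) * real m"
    by (metis of_nat_le_iff of_nat_mult)
  also have "\<dots> \<le> max c 1 * 5 powr delta * real m" using net_count by (rule mult_right_mono) simp
  finally show ?thesis .
qed

lemma fractal_balanced_ball:
  fixes delta c :: real
  obtains K :: nat where "K \<ge> 2" "\<And>P::'a::euclidean_space set. finite P \<Longrightarrow> card P > K \<Longrightarrow>
      fractal_bound delta c P \<Longrightarrow> \<exists>z R. R > 0 \<and> real (card (P \<inter> cball z R)) \<ge> real (card P) / K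
        \<and> real (card (P \<inter> cball z (2 * R))) \<le> real (card P) / 2"
proof -
  define C where "C = max c 1 * 5 powr delta"
  define K where "K = nat \<lceil>2 * C\<rceil> + 2"
  have K2: "K \<ge> 2" and KC: "real K \<ge> 2 * C" unfolding K_def by linarith+
  have "\<exists>z R. R > 0 \<and> real (card (P \<inter> cball z R)) \<ge> real (card P) / K
           \<and> real (card (P \<inter> cball z (2 * R))) \<le> real (card P) / 2"
    if fin: "finite P" and big: "card P > K" and fb: "fractal_bound delta c P" for P :: "'a set"
  proof -
    define n where "n = card P"
    define k where "k = nat \<lceil>real n / K\<rceil>"
    have nK: "real n / K > 1" using big K2 unfolding n_def by (simp add: field_simps)
    have k2: "k \<ge> 2" unfolding k_def using nK by linarith
    have "real n / K \<le> real n / 1" using K2 by (intro divide_left_mono) auto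
    then have kn: "k \<le> card P" unfolding k_def n_def by linarith
    obtain z R where zR: "z \<in> P" "R > 0" "card (P \<inter> cball z R) \<ge> k"
      and light: "\<And>q r. q \<in> P \<Longrightarrow> r < R \<Longrightarrow> card (P \<inter> cball q r) < k"
      using smallest_heavy_ball[OF fin k2 kn] by blast
    have "card (P \<inter> cball q (R / 2)) \<le> k - 1" if "q \<in> P" for q
      using light[OF that, of "R / 2"] zR(2) by arith
    then have "real (card (P \<inter> cball z (2 * R))) \<le> C * real (k - 1)"
      unfolding C_def by (rule doubled_ball_count_le[OF fin fb zR(2)])
    also have "\<dots> = C * (real k - 1)" using k2 by simp
    also have "\<dots> \<le> C * (real n / K)"
    proof (rule mult_left_mono)
      show "real k - 1 \<le> real n / K" unfolding k_def using nK by linarith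
    qed (simp add: C_def)
    also have "\<dots> \<le> (real K / 2) * (real n / K)" using KC by (intro mult_right_mono) auto
    also have "\<dots> = real n / 2" using K2 by simp
    finally have "real (card (P \<inter> cball z (2 * R))) \<le> real n / 2" .
    moreover have "real (card (P \<inter> cball z R)) \<ge> real n / K" using zR(3) unfolding k_def by linarith
    ultimately show ?thesis using zR(2) unfolding n_def by blast
  qed
  then show ?thesis using that[OF K2] by blast
qed

lemma closed_segment_dist_le:
  fixes p q :: "'a::euclidean_space"
  assumes "y0 \<in> closed_segment p q" "y1 \<in> closed_segment p q"
  shows "dist y0 y1 \<le> dist p q"
proof -
  have "dist y0 y1 \<le> dist y0 p \<or> dist y0 y1 \<le> dist y0 q"
    using dist_decreases_closed_segment[OF assms(2)] by simp
  then show ?thesis using dist_in_closed_segment[OF assms(1)] by linarith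
qed

lemma segment_sphere_crossings:
  fixes p q z :: "'a::euclidean_space"
  assumes h: "h > 0"
  shows "real (card {k. k < M \<and> closed_segment p q \<inter> sphere z (R + real k * h) \<noteq> {}})
           \<le> dist p q / h + 1"
proof -
  define S where "S = {k. k < M \<and> closed_segment p q \<inter> sphere z (R + real k * h) \<noteq> {}}"
  have finS: "finite S" unfolding S_def by simp
  show ?thesis
  proof (cases "S = {}")
    case True then show ?thesis unfolding S_def[symmetric] using h by simp
  next
    case False
    define k0 where "k0 = Min S"
    define k1 where "k1 = Max S"
    have k0: "k0 \<in> S" and k1: "k1 \<in> S" unfolding k0_def k1_def using finS False by simp_all
    then have "k0 \<le> k1" unfolding k0_def using finS by simp
    from k0 k1 obtain y0 y1 where y: "y0 \<in> closed_segment p q" "dist z y0 = R + real k0 * h"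
      "y1 \<in> closed_segment p q" "dist z y1 = R + real k1 * h"
      unfolding S_def by auto
    have "(real k1 - real k0) * h \<le> dist p q"
      using dist_triangle[of z y1 y0] y closed_segment_dist_le[of y0 p q y1] by (simp add: algebra_simps)
    then have "real k1 - real k0 \<le> dist p q / h" using h by (simp add: field_simps)
    moreover have "S \<subseteq> {k0..k1}" unfolding k0_def k1_def using finS by auto
    then have "card S \<le> Suc k1 - k0" using card_mono[of "{k0..k1}" S] by simp
    then have "real (card S) \<le> real k1 + 1 - real k0" using \<open>k0 \<le> k1\<close> by linarith
    ultimately show ?thesis unfolding S_def[symmetric] by linarith
  qed
qed

lemma double_counting_below_average:
  fixes f :: "nat \<Rightarrow> nat \<Rightarrow> bool"
  assumes M: "M > 0"
  obtains k where "k < M"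
    "real (card {i. i < n \<and> f i k}) * real M \<le> (\<Sum>i<n. real (card {k. k < M \<and> f i k}))"
proof -
  have count: "real (card {x. x < m \<and> P x}) = (\<Sum>x<m. if P x then 1 else 0)" for m and P :: "nat \<Rightarrow> bool"
  proof -
    have "{..<m} \<inter> {x. P x} = {x. x < m \<and> P x}" by auto
    then show ?thesis by (simp add: sum.If_cases)
  qed
  have swap: "(\<Sum>k<M. real (card {i. i < n \<and> f i k})) = (\<Sum>i<n. real (card {k. k < M \<and> f i k}))"
    unfolding count by (rule sum.swap)
  have "\<exists>k<M. real (card {i. i < n \<and> f i k}) * real M \<le> (\<Sum>i<n. real (card {k. k < M \<and> f i k}))"
  proof (rule ccontr)
    assume none: "\<not> ?thesis"
    have "real (card {i. i < n \<and> f i k}) * real M > (\<Sum>i<n. real (card {k. k < M \<and> f i k}))"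
      if "k < M" for k using that none by (meson not_le)
    then have "(\<Sum>k<M. (\<Sum>i<n. real (card {k. k < M \<and> f i k})))
             < (\<Sum>k<M. real (card {i. i < n \<and> f i k}) * real M)"
      using M by (intro sum_strict_mono) auto
    also have "\<dots> = real M * (\<Sum>k<M. real (card {i. i < n \<and> f i k}))"
      by (simp add: sum_distrib_left mult.commute)
    also have "\<dots> = real M * (\<Sum>i<n. real (card {k. k < M \<and> f i k}))"
      by (simp only: swap)
    finally show False by simp
  qed
  then show ?thesis using that by blast
qed

lemma segment_crossings_of_concentric_spheres:
  fixes p q z :: "'a::euclidean_space"
  assumes n: "n > 0" and R: "R > 0"
  shows "real (card {k. k < n \<and> closed_segment p q \<inter> sphere z (R + real k * (R / n)) \<noteq> {}})
     \<le> real n * (if closed_segment p q \<inter> cball z (2 * R) = {} then 0 else min 1 (dist p q / R)) + 1"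
proof -
  let ?S = "{k. k < n \<and> closed_segment p q \<inter> sphere z (R + real k * (R / n)) \<noteq> {}}"
  have h: "R / n > 0" using n R by simp
  have less: "real k * (R / n) < R" if "k < n" for k
    using that n R by (simp add: field_simps)
  have inside: "sphere z (R + real k * (R / n)) \<subseteq> cball z (2 * R)" if "k < n" for k
    using less[OF that] by auto
  consider "closed_segment p q \<inter> cball z (2 * R) = {}"
    | "closed_segment p q \<inter> cball z (2 * R) \<noteq> {}" "dist p q \<ge> R"
    | "closed_segment p q \<inter> cball z (2 * R) \<noteq> {}" "dist p q < R"
    by fastforce
  then show ?thesis
  proof cases
    case 1
    then have "?S = {}" using inside by blast
    then show ?thesis using 1 by (simp del: Collect_empty_eq)
  next
    case 2
    have "?S \<subseteq> {..<n}" by auto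
    then have "card ?S \<le> n" by (metis card_lessThan card_mono finite_lessThan)
    moreover have "min 1 (dist p q / R) = 1" using 2 R by simp
    ultimately show ?thesis using 2 by simp
  next
    case 3
    have "dist p q / (R / n) = real n * (dist p q / R)" by simp
    moreover have "min 1 (dist p q / R) = dist p q / R" using 3 R by simp
    ultimately show ?thesis using 3 segment_sphere_crossings[OF h, of n p q z R] by (simp add: mult.commute)
  qed
qed

text \<open>Averaging over the n spheres of radii R, R + R/n, ..., R + (n-1) R/n.\<close>
lemma exists_sparse_sphere:
  fixes p q :: "nat \<Rightarrow> 'a::euclidean_space" and z :: 'a
  assumes n: "n > 0" and R: "R > 0"
  defines "Long \<equiv> {i. i < n \<and> closed_segment (p i) (q i) \<inter> cball z (2 * R) \<noteq> {} \<and> dist (p i) (q i) \<ge> R}"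
    and "Short \<equiv> {i. i < n \<and> closed_segment (p i) (q i) \<inter> cball z (2 * R) \<noteq> {} \<and> dist (p i) (q i) < R}"
  obtains r where "R \<le> r" "r < 2 * R"
    "real (card {i. i < n \<and> closed_segment (p i) (q i) \<inter> sphere z r \<noteq> {}})
       \<le> real (card Long) + (\<Sum>i\<in>Short. dist (p i) (q i) / R) + 1"
proof -
  define w where "w i = (if closed_segment (p i) (q i) \<inter> cball z (2 * R) = {} then 0
    else min 1 (dist (p i) (q i) / R))" for i
  define meets where "meets i k \<longleftrightarrow> closed_segment (p i) (q i) \<inter> sphere z (R + real k * (R / n)) \<noteq> {}"
    for i k
  have "(\<Sum>i<n. w i) = (\<Sum>i\<in>Long \<union> Short. w i)"
    by (rule sum.mono_neutral_right) (auto simp: w_def Long_def Short_def)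
  also have "\<dots> = (\<Sum>i\<in>Long. w i) + (\<Sum>i\<in>Short. w i)"
    by (rule sum.union_disjoint) (auto simp: Long_def Short_def)
  also have "\<dots> = real (card Long) + (\<Sum>i\<in>Short. dist (p i) (q i) / R)"
    using R by (auto simp: w_def Long_def Short_def intro!: sum.cong)
  finally have sum_w: "(\<Sum>i<n. w i) = real (card Long) + (\<Sum>i\<in>Short. dist (p i) (q i) / R)" .
  have "(\<Sum>i<n. real (card {k. k < n \<and> meets i k})) \<le> (\<Sum>i<n. real n * w i + 1)"
    using segment_crossings_of_concentric_spheres[OF n R] unfolding meets_def w_def by (intro sum_mono)
  also have "\<dots> = real n * (real (card Long) + (\<Sum>i\<in>Short. dist (p i) (q i) / R) + 1)"
    by (simp add: sum.distrib sum_w flip: sum_distrib_left) (simp add: algebra_simps)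
  finally have avg: "(\<Sum>i<n. real (card {k. k < n \<and> meets i k}))
      \<le> real n * (real (card Long) + (\<Sum>i\<in>Short. dist (p i) (q i) / R) + 1)" .
  obtain k where k: "k < n"
    "real (card {i. i < n \<and> meets i k}) * real n \<le> (\<Sum>i<n. real (card {k. k < n \<and> meets i k}))"
    using double_counting_below_average[OF n, of n meets] by blast
  show ?thesis
  proof (rule that)
    have "real k * (R / n) < R" using k(1) n R by (simp add: field_simps)
    then show "R \<le> R + real k * (R / n)" "R + real k * (R / n) < 2 * R" using R by auto
    have "real n * real (card {i. i < n \<and> meets i k})
        \<le> real n * (real (card Long) + (\<Sum>i\<in>Short. dist (p i) (q i) / R) + 1)"
      using k(2) avg by (simp add: mult.commute)
    then show "real (card {i. i < n \<and> closed_segment (p i) (q i) \<inter> sphere z (R + real k * (R / n)) \<noteq> {}})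
        \<le> real (card Long) + (\<Sum>i\<in>Short. dist (p i) (q i) / R) + 1"
      using n unfolding meets_def by (simp add: mult_le_cancel_left_pos)
  qed
qed

definition dyadic_profile :: "real \<Rightarrow> real \<Rightarrow> nat \<Rightarrow> nat set \<Rightarrow> (nat \<Rightarrow> real) \<Rightarrow> bool" where
  "dyadic_profile A d n J N \<longleftrightarrow>
     finite J \<and> (\<forall>j\<in>J. 0 \<le> N j \<and> N j \<le> real n \<and> N j \<le> A * (2 ^ j) powr d)"

lemma dyadic_term_le_geometric:
  fixes N A d :: real
  assumes "N \<le> A * (2 ^ j) powr d"
  shows "N / 2 ^ j \<le> A * (2 powr (d - 1)) ^ j"
proof -
  have "(2 ^ j) powr d / 2 ^ j = 2 powr (real j * d) / 2 powr (real j)"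
    by (simp add: powr_realpow[symmetric] powr_powr)
  also have "\<dots> = 2 powr ((d - 1) * real j)"
    by (simp only: powr_diff[symmetric]) (simp add: algebra_simps)
  also have "\<dots> = (2 powr (d - 1)) powr (real j)" by (simp add: powr_powr)
  finally have "(2 ^ j) powr d / 2 ^ j = (2 powr (d - 1)) ^ j" by (simp add: powr_realpow)
  then show ?thesis using assms by (metis divide_right_mono times_divide_eq_right zero_le_numeral zero_le_power)
qed

lemma half_power_tail_sum: "(\<Sum>j\<in>{T..<m}. (1 / 2 :: real) ^ j) \<le> 2 * (1 / 2) ^ T"
proof (cases "T \<le> m")
  case True
  have "(1 - 1 / 2) * (\<Sum>j=T..m. (1 / 2 :: real) ^ j) = (1 / 2) ^ T - (1 / 2) ^ Suc m"
    by (rule sum_gp_multiplied[OF True])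
  then have geom: "(\<Sum>j=T..m. (1 / 2 :: real) ^ j) = 2 * ((1 / 2) ^ T - (1 / 2) ^ Suc m)" by simp
  have "(\<Sum>j\<in>{T..<m}. (1 / 2 :: real) ^ j) \<le> (\<Sum>j=T..m. (1 / 2) ^ j)" by (intro sum_mono2) auto
  also have "\<dots> \<le> 2 * (1 / 2) ^ T" unfolding geom by simp
  finally show ?thesis .
qed simp

text \<open>Small scales are bounded by the geometric growth A 2^(j(d-1)), large ones by the trivial
  bound n, which decays like 2^(-j); T is the crossover scale.\<close>
lemma dyadic_sum_split:
  assumes prof: "dyadic_profile A d n J N" and A: "A \<ge> 0"
  shows "(\<Sum>j\<in>J. N j / 2 ^ j) \<le> (\<Sum>j<T. A * (2 powr (d - 1)) ^ j) + 2 * real n * (1 / 2) ^ T"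
proof -
  have fin: "finite J" and NJ: "\<And>j. j \<in> J \<Longrightarrow> 0 \<le> N j \<and> N j \<le> real n \<and> N j \<le> A * (2 ^ j) powr d"
    using prof unfolding dyadic_profile_def by auto
  obtain m where m: "J \<subseteq> {..<m}" using fin finite_nat_iff_bounded by blast
  have "(\<Sum>j\<in>J. N j / 2 ^ j) = (\<Sum>j\<in>J \<inter> {..<T}. N j / 2 ^ j) + (\<Sum>j\<in>J - {..<T}. N j / 2 ^ j)"
    using fin by (rule sum.Int_Diff)
  also have "(\<Sum>j\<in>J \<inter> {..<T}. N j / 2 ^ j) \<le> (\<Sum>j\<in>J \<inter> {..<T}. A * (2 powr (d - 1)) ^ j)"
    using NJ dyadic_term_le_geometric by (intro sum_mono) auto
  also have "\<dots> \<le> (\<Sum>j<T. A * (2 powr (d - 1)) ^ j)" using A by (intro sum_mono2) auto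
  also have "(\<Sum>j\<in>J - {..<T}. N j / 2 ^ j) \<le> (\<Sum>j\<in>J - {..<T}. real n * (1 / 2) ^ j)"
    using NJ by (intro sum_mono) (auto simp: divide_right_mono power_one_over)
  also have "\<dots> \<le> (\<Sum>j\<in>{T..<m}. real n * (1 / 2) ^ j)" using m by (intro sum_mono2) auto
  also have "\<dots> \<le> real n * (2 * (1 / 2) ^ T)"
    unfolding sum_distrib_left[symmetric] by (intro mult_left_mono half_power_tail_sum) auto
  finally show ?thesis by simp
qed

lemma exists_power_of_two_between:
  fixes x d :: real assumes x: "x \<ge> 1" and d: "d > 0"
  obtains T :: nat where "x powr (1 / d) \<le> 2 ^ T" "2 ^ T \<le> 2 * x powr (1 / d)" "real T \<le> log 2 x / d + 1"
proof -
  define y where "y = log 2 x / d"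
  have y0: "y \<ge> 0" unfolding y_def using x d by simp
  define T where "T = nat \<lceil>y\<rceil>"
  have T: "y \<le> real T" "real T \<le> y + 1" unfolding T_def using y0 by linarith+
  have xy: "x powr (1 / d) = 2 powr y" unfolding y_def using x d
    by (simp add: powr_powr[symmetric] divide_inverse)
  have "2 powr y \<le> 2 powr (real T)" "2 powr (real T) \<le> 2 powr (y + 1)" using T by simp_all
  moreover have "2 powr (y + 1) = 2 * 2 powr y" "(2::real) powr (real T) = 2 ^ T"
    by (simp_all add: powr_add powr_realpow)
  ultimately show ?thesis using that xy T(2) unfolding y_def by simp
qed

lemma dyadic_sum_bound_lt1:
  assumes prof: "dyadic_profile A d n J N" and A: "A \<ge> 0" and d: "d < 1"
  shows "(\<Sum>j\<in>J. N j / 2 ^ j) \<le> A / (1 - 2 powr (d - 1))"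
proof -
  define q :: real where "q = 2 powr (d - 1)"
  have q: "0 < q" "q < 1" unfolding q_def using d by (simp_all add: powr_less_one)
  obtain m where "J \<subseteq> {..<m}" using prof finite_nat_iff_bounded unfolding dyadic_profile_def by blast
  then have "(\<Sum>j\<in>J. N j / 2 ^ j) \<le> (\<Sum>j<m. A * q ^ j)"
    using prof A q unfolding dyadic_profile_def q_def
    by (intro order.trans[OF sum_mono sum_mono2]) (auto intro: dyadic_term_le_geometric)
  also have "\<dots> = A * ((1 - q ^ m) / (1 - q))"
    using q by (simp add: sum_distrib_left[symmetric] geometric_sum field_simps)
  also have "\<dots> \<le> A * (1 / (1 - q))" using A q by (intro mult_left_mono divide_right_mono) auto
  finally show ?thesis unfolding q_def by simp
qed

lemma dyadic_sum_bound_eq1: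
  assumes prof: "dyadic_profile A 1 n J N" and A: "A \<ge> 1" and nA: "real n \<ge> A"
  shows "(\<Sum>j\<in>J. N j / 2 ^ j) \<le> A * log 2 (real n) + 3 * A"
proof -
  have x1: "real n / A \<ge> 1" using nA A by simp
  obtain T :: nat where "(real n / A) powr (1 / 1) \<le> 2 ^ T" "real T \<le> log 2 (real n / A) / 1 + 1"
    using exists_power_of_two_between[OF x1 zero_less_one] by blast
  then have T: "real n / A \<le> 2 ^ T" "real T \<le> log 2 (real n / A) + 1" using x1 A by simp_all
  have "log 2 (real n / A) \<le> log 2 (real n)" using A nA by (simp add: log_divide)
  then have "A * real T \<le> A * (log 2 (real n) + 1)" using T(2) A by (intro mult_left_mono) auto
  then have "(\<Sum>j<T. A * (2 powr (1 - 1)) ^ j) \<le> A * log 2 (real n) + A"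
    by (simp add: algebra_simps)
  moreover have "2 * real n * (1 / 2) ^ T \<le> 2 * A"
  proof -
    have "real n \<le> A * 2 ^ T" using T(1) A by (simp add: divide_le_eq mult.commute)
    then show ?thesis by (simp add: power_one_over divide_le_eq)
  qed
  ultimately show ?thesis using dyadic_sum_split[OF prof, of T] A by linarith
qed

lemma dyadic_sum_bound_gt1:
  assumes prof: "dyadic_profile A d n J N" and A: "A \<ge> 1" and nA: "real n \<ge> A" and d: "d > 1"
  defines "q \<equiv> 2 powr (d - 1)"
  shows "(\<Sum>j\<in>J. N j / 2 ^ j) \<le> (A * q / (q - 1) + 2 * A powr (1 / d)) * real n powr (1 - 1 / d)"
proof -
  have q1: "q > 1" unfolding q_def using d by simp
  have x1: "real n / A \<ge> 1" and npos: "real n > 0" using nA A by simp_all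
  obtain T :: nat where T: "(real n / A) powr (1 / d) \<le> 2 ^ T" "2 ^ T \<le> 2 * (real n / A) powr (1 / d)"
    using exists_power_of_two_between[OF x1, of d] d by auto
  have "q ^ T = (2 ^ T) powr (d - 1)"
    unfolding q_def by (simp add: powr_realpow[symmetric] powr_powr mult.commute)
  also have "\<dots> \<le> (2 * (real n / A) powr (1 / d)) powr (d - 1)"
    using T(2) d by (intro powr_mono2) auto
  also have "\<dots> = q * (real n / A) powr (1 - 1 / d)"
    unfolding q_def using d by (simp add: powr_mult powr_powr field_simps)
  also have "\<dots> \<le> q * real n powr (1 - 1 / d)"
    using A npos d q1 by (intro mult_left_mono powr_mono2) (auto simp: field_simps)
  finally have qT: "q ^ T \<le> q * real n powr (1 - 1 / d)" .
  have "(\<Sum>j<T. A * q ^ j) = A * ((q ^ T - 1) / (q - 1))"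
    using q1 by (simp add: sum_distrib_left[symmetric] geometric_sum)
  also have "\<dots> \<le> A * (q ^ T / (q - 1))" using A q1 by (intro mult_left_mono divide_right_mono) auto
  also have "\<dots> \<le> A * q / (q - 1) * real n powr (1 - 1 / d)"
    using qT A q1 by (simp add: divide_right_mono mult_left_mono)
  finally have small: "(\<Sum>j<T. A * q ^ j) \<le> A * q / (q - 1) * real n powr (1 - 1 / d)" .
  have "0 < (real n / A) powr (1 / d)" unfolding powr_gt_zero using A npos by auto
  then have "2 * real n * (1 / 2) ^ T \<le> 2 * real n / (real n / A) powr (1 / d)"
    using T(1) npos unfolding power_one_over by (simp add: divide_left_mono)
  also have "\<dots> = 2 * A powr (1 / d) * real n powr (1 - 1 / d)"
    using npos A by (simp add: powr_divide powr_diff field_simps)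
  finally have large: "2 * real n * (1 / 2) ^ T \<le> 2 * A powr (1 / d) * real n powr (1 - 1 / d)" .
  show ?thesis
    using dyadic_sum_split[OF prof, of T] small large A unfolding q_def by (simp add: algebra_simps)
qed

lemma dyadic_sum_le_sep_bound:
  fixes d A :: real assumes d: "d > 0" and A: "A \<ge> 1"
  obtains C where "C > 0" "\<And>n J N. real n \<ge> A \<Longrightarrow> n \<ge> 3 \<Longrightarrow> dyadic_profile A d n J N \<Longrightarrow>
     (\<Sum>j\<in>J. N j / 2 ^ j) \<le> C * sep_bound d n"
proof -
  consider "d < 1" | "d = 1" | "d > 1" by fastforce
  then show ?thesis
  proof cases
    case 1
    define p :: real where "p = 2 powr (1 - d)"
    define C where "C = A * p"
    have C: "C > 0" unfolding C_def p_def using A by simp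
    have "p > 1" unfolding p_def using 1 by simp
    moreover have "2 powr (d - 1) = 1 / p" unfolding p_def by (metis minus_diff_eq powr_minus_divide)
    ultimately have "A / (1 - 1 / p) = C * (1 / (p - 1))" "2 powr (d - 1) = 1 / p"
      unfolding C_def by (simp_all add: field_simps)
    then have "A / (1 - 2 powr (d - 1)) = C * (1 / (2 powr (1 - d) - 1))" unfolding p_def by simp
    then show ?thesis
      using that[OF C] dyadic_sum_bound_lt1[of A d] A 1 unfolding sep_bound_def by simp
  next
    case 2
    define C where "C = A / ln 2 + 3 * A / ln 3"
    have C: "C > 0" unfolding C_def using A by (intro add_pos_pos divide_pos_pos) auto
    have "A * log 2 (real n) + 3 * A \<le> C * ln (real n)" if "n \<ge> 3" for n :: nat
    proof -
      have "3 * A \<le> 3 * A / ln 3 * ln (real n)" using that A by (simp add: field_simps)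
      then show ?thesis unfolding C_def log_def by (simp add: algebra_simps)
    qed
    then show ?thesis
      using that[OF C] dyadic_sum_bound_eq1[OF _ A] 2 unfolding sep_bound_def by fastforce
  next
    case 3
    define C where "C = A * 2 powr (d - 1) / (2 powr (d - 1) - 1) + 2 * A powr (1 / d)"
    have C: "C > 0" unfolding C_def using A 3 by (intro add_pos_pos) auto
    show ?thesis
      using that[OF C] dyadic_sum_bound_gt1[OF _ A _ 3] 3 unfolding sep_bound_def C_def by simp
  qed
qed

definition dyadic_level :: "real \<Rightarrow> real \<Rightarrow> nat" where
  "dyadic_level R l = nat \<lfloor>log 2 (R / l)\<rfloor>"

lemma dyadic_level_bounds:
  assumes l: "0 < l" "l < R"
  shows "l / R \<le> 1 / 2 ^ dyadic_level R l" "R / 2 ^ Suc (dyadic_level R l) < l"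
proof -
  define j where "j = dyadic_level R l"
  have u: "R / l > 1" using l by simp
  then have "log 2 (R / l) > 0" by simp
  then have lg: "real j \<le> log 2 (R / l)" "log 2 (R / l) < real j + 1"
    unfolding j_def dyadic_level_def by linarith+
  have "2 ^ j \<le> R / l"
    using powr_mono[OF lg(1), of 2] u by (simp add: powr_realpow)
  then show "l / R \<le> 1 / 2 ^ dyadic_level R l" using l unfolding j_def by (simp add: field_simps)
  have "R / l < 2 ^ Suc j"
    using powr_less_mono[OF lg(2), of 2] u by (simp add: powr_realpow[symmetric] powr_add)
  then show "R / 2 ^ Suc (dyadic_level R l) < l" using l unfolding j_def by (simp add: field_simps)
qed

lemma dyadic_profile_mono:
  assumes "dyadic_profile A d n J N" "A \<le> A'"
  shows "dyadic_profile A' d n J N"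
  using assms unfolding dyadic_profile_def by (meson mult_right_mono order_trans powr_ge_zero)

lemma edge_length_pos:
  assumes "distinct xs" "length xs \<ge> 2" "i < length xs"
  shows "edge_length xs i > 0"
proof -
  have "i \<noteq> Suc i mod length xs"
    using assms(2,3) by (cases "Suc i = length xs") auto
  moreover have "Suc i mod length xs < length xs" by (rule mod_less_divisor) (use assms(2) in linarith)
  ultimately show ?thesis
    using assms unfolding edge_length_def by (simp add: nth_eq_iff_index_eq)
qed

text \<open>Each such edge starts eps-close to a net point near z, and at most K edges longer than
  5 eps pass through the eps-ball around a net point.\<close>
lemma edges_near_ball_le_net_count:
  fixes xs :: "'a::euclidean_space list"
  assumes pack: "\<And>z r. r > 0 \<Longrightarrow>
      card {i. i < length xs \<and> edge_length xs i > 5 * r \<and> tour_edge xs i \<inter> cball z r \<noteq> {}} \<le> K"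
    and net: "eps_net N (set xs) eps" and eps: "eps > 0"
  shows "card {i. i < length xs \<and> tour_edge xs i \<inter> cball z \<rho> \<noteq> {}
            \<and> 5 * eps < edge_length xs i \<and> edge_length xs i \<le> L}
       \<le> card (N \<inter> cball z (\<rho> + L + eps)) * K"
proof -
  define Q where "Q = N \<inter> cball z (\<rho> + L + eps)"
  have finQ: "finite Q" unfolding Q_def using net by (auto simp: eps_net_def intro: finite_subset)
  define near where
    "near q = {i. i < length xs \<and> edge_length xs i > 5 * eps \<and> tour_edge xs i \<inter> cball q eps \<noteq> {}}" for q
  have "{i. i < length xs \<and> tour_edge xs i \<inter> cball z \<rho> \<noteq> {}
            \<and> 5 * eps < edge_length xs i \<and> edge_length xs i \<le> L} \<subseteq> (\<Union>q\<in>Q. near q)"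
  proof
    fix i assume "i \<in> {i. i < length xs \<and> tour_edge xs i \<inter> cball z \<rho> \<noteq> {}
            \<and> 5 * eps < edge_length xs i \<and> edge_length xs i \<le> L}"
    then obtain y where i: "i < length xs" "y \<in> tour_edge xs i" "y \<in> cball z \<rho>"
      "5 * eps < edge_length xs i" "edge_length xs i \<le> L"
      by auto
    then obtain q where q: "q \<in> N" "dist (xs ! i) q \<le> eps"
      using net unfolding eps_net_def by (meson nth_mem)
    have "dist (xs ! i) y \<le> edge_length xs i"
      using i(2) dist_in_closed_segment unfolding tour_edge_def edge_length_def by (metis dist_commute)
    then have "q \<in> Q" unfolding Q_def using q i(3,5) dist_triangle[of z q y] dist_triangle[of y q "xs ! i"]
      by (auto simp: dist_commute)
    moreover have "xs ! i \<in> tour_edge xs i \<inter> cball q eps" using q unfolding tour_edge_def by (simp add: dist_commute)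
    ultimately show "i \<in> (\<Union>q\<in>Q. near q)" unfolding near_def using i(1,4) by blast
  qed
  moreover have "finite (\<Union>q\<in>Q. near q)" using finQ unfolding near_def by simp
  ultimately have "card {i. i < length xs \<and> tour_edge xs i \<inter> cball z \<rho> \<noteq> {}
            \<and> 5 * eps < edge_length xs i \<and> edge_length xs i \<le> L} \<le> card (\<Union>q\<in>Q. near q)"
    by (rule card_mono[rotated])
  also have "\<dots> \<le> (\<Sum>q\<in>Q. card (near q))" by (rule card_UN_le[OF finQ])
  also have "\<dots> \<le> card Q * K" using sum_bounded_above[of Q "\<lambda>q. card (near q)" K] pack eps
    unfolding near_def by auto
  finally show ?thesis unfolding Q_def .
qed

lemma edges_at_scale_count:
  fixes xs :: "'a::euclidean_space list"
  assumes pack: "\<And>z r. r > 0 \<Longrightarrow>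
      card {i. i < length xs \<and> edge_length xs i > 5 * r \<and> tour_edge xs i \<inter> cball z r \<noteq> {}} \<le> K"
    and fb: "fractal_bound delta c P" and fin: "finite P" and P: "set xs = P"
    and delta: "delta \<ge> 0" and R: "R > 0"
  shows "real (card {i. i < length xs \<and> tour_edge xs i \<inter> cball z (2 * R) \<noteq> {}
            \<and> R / 2 ^ Suc j < edge_length xs i \<and> edge_length xs i < R})
       \<le> real K * max c 1 * 37 powr delta * (2 ^ j) powr delta"
proof -
  define eps where "eps = R / 2 ^ Suc j / 6"
  have eps: "eps > 0" unfolding eps_def using R by simp
  have "(1::real) \<le> 2 ^ Suc j" by (rule one_le_power) simp
  then have "R / 2 ^ Suc j \<le> R" using R by (simp add: divide_le_eq del: power_Suc)
  then have epsR: "eps \<le> R" unfolding eps_def using R by simp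
  obtain N where N: "eps_net N P eps" using eps_net_exists[OF fin eps] by auto
  have "2 * eps \<le> 2 * R + R + eps" using epsR R by linarith
  then have "real (card (N \<inter> cball z (2 * R + R + eps))) \<le> c * ((2 * R + R + eps) / eps) powr delta"
    by (rule fractal_boundD[OF fb eps _ N])
  also have "\<dots> \<le> max c 1 * ((2 * R + R + eps) / eps) powr delta" by (intro mult_right_mono) auto
  also have "(2 * R + R + eps) / eps = 36 * 2 ^ j + 1" unfolding eps_def using R by (simp add: field_simps)
  also have "(36 * 2 ^ j + 1) powr delta \<le> (37 * 2 ^ j :: real) powr delta"
    using delta by (intro powr_mono2) auto
  also have "(37 * 2 ^ j :: real) powr delta = 37 powr delta * (2 ^ j) powr delta" by (rule powr_mult)
  finally have net_count: "real (card (N \<inter> cball z (2 * R + R + eps))) \<le> max c 1 * 37 powr delta * (2 ^ j) powr delta"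
    by (simp add: mult_left_mono mult.assoc)
  have "5 * eps = (5 / 6) * (R / 2 ^ Suc j)" "0 \<le> R / 2 ^ Suc j" unfolding eps_def using R by simp_all
  then have "5 * eps \<le> R / 2 ^ Suc j" by linarith
  then have "{i. i < length xs \<and> tour_edge xs i \<inter> cball z (2 * R) \<noteq> {}
            \<and> R / 2 ^ Suc j < edge_length xs i \<and> edge_length xs i < R}
      \<subseteq> {i. i < length xs \<and> tour_edge xs i \<inter> cball z (2 * R) \<noteq> {}
            \<and> 5 * eps < edge_length xs i \<and> edge_length xs i \<le> R}"
    by force
  then have "card {i. i < length xs \<and> tour_edge xs i \<inter> cball z (2 * R) \<noteq> {}
            \<and> R / 2 ^ Suc j < edge_length xs i \<and> edge_length xs i < R}
      \<le> card {i. i < length xs \<and> tour_edge xs i \<inter> cball z (2 * R) \<noteq> {}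
            \<and> 5 * eps < edge_length xs i \<and> edge_length xs i \<le> R}"
    by (rule card_mono[rotated]) simp
  also have "\<dots> \<le> card (N \<inter> cball z (2 * R + R + eps)) * K"
    using edges_near_ball_le_net_count[OF pack N[folded P] eps] .
  finally have "card {i. i < length xs \<and> tour_edge xs i \<inter> cball z (2 * R) \<noteq> {}
            \<and> R / 2 ^ Suc j < edge_length xs i \<and> edge_length xs i < R}
      \<le> card (N \<inter> cball z (2 * R + R + eps)) * K" .
  then have "real (card {i. i < length xs \<and> tour_edge xs i \<inter> cball z (2 * R) \<noteq> {}
            \<and> R / 2 ^ Suc j < edge_length xs i \<and> edge_length xs i < R})
      \<le> real (card (N \<inter> cball z (2 * R + R + eps))) * real K"
    by (simp only: of_nat_le_iff flip: of_nat_mult)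
  also have "\<dots> \<le> max c 1 * 37 powr delta * (2 ^ j) powr delta * real K"
    using net_count by (intro mult_right_mono) auto
  finally show ?thesis by (simp add: algebra_simps)
qed

lemma long_edges_near_ball_count:
  fixes xs :: "'a::euclidean_space list"
  assumes pack: "\<And>z r. r > 0 \<Longrightarrow>
      card {i. i < length xs \<and> edge_length xs i > 5 * r \<and> tour_edge xs i \<inter> cball z r \<noteq> {}} \<le> K"
    and F: "finite F" "card F \<le> M" "cball z (2 * R) \<subseteq> (\<Union>f\<in>F. cball f ((1/12) * (2 * R)))"
    and R: "R > 0"
  shows "card {i. i < length xs \<and> tour_edge xs i \<inter> cball z (2 * R) \<noteq> {} \<and> edge_length xs i \<ge> R} \<le> M * K"
proof -
  define near where
    "near f = {i. i < length xs \<and> edge_length xs i > 5 * (R / 6) \<and> tour_edge xs i \<inter> cball f (R / 6) \<noteq> {}}" for f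
  have "{i. i < length xs \<and> tour_edge xs i \<inter> cball z (2 * R) \<noteq> {} \<and> edge_length xs i \<ge> R}
      \<subseteq> (\<Union>f\<in>F. near f)"
  proof
    fix i assume "i \<in> {i. i < length xs \<and> tour_edge xs i \<inter> cball z (2 * R) \<noteq> {} \<and> edge_length xs i \<ge> R}"
    then obtain y where i: "i < length xs" "y \<in> tour_edge xs i" "y \<in> cball z (2 * R)" "edge_length xs i \<ge> R"
      by auto
    then obtain f where "f \<in> F" "y \<in> cball f (R / 6)" using F(3) by fastforce
    then show "i \<in> (\<Union>f\<in>F. near f)" unfolding near_def using i R by fastforce
  qed
  moreover have "finite (\<Union>f\<in>F. near f)" using F(1) unfolding near_def by simp
  ultimately have "card {i. i < length xs \<and> tour_edge xs i \<inter> cball z (2 * R) \<noteq> {} \<and> edge_length xs i \<ge> R}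
      \<le> card (\<Union>f\<in>F. near f)"
    by (rule card_mono[rotated])
  also have "\<dots> \<le> (\<Sum>f\<in>F. card (near f))" by (rule card_UN_le[OF F(1)])
  also have "\<dots> \<le> card F * K"
    using sum_bounded_above[of F "\<lambda>f. card (near f)" K] pack[of "R / 6"] R unfolding near_def by simp
  also have "\<dots> \<le> M * K" using F(2) by simp
  finally show ?thesis .
qed

text \<open>Grouping the short edges near z by dyadic length scale, the number at scale j is bounded
  through the packing condition; weighting each by its relative length gives a dyadic sum.\<close>
lemma short_edges_dyadic_profile:
  fixes xs :: "'a::euclidean_space list" and z :: 'a
  assumes pack: "\<And>z r. r > 0 \<Longrightarrow>
      card {i. i < length xs \<and> edge_length xs i > 5 * r \<and> tour_edge xs i \<inter> cball z r \<noteq> {}} \<le> K"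
    and fb: "fractal_bound delta c P" and fin: "finite P" and P: "set xs = P" and dist: "distinct xs"
    and len: "length xs \<ge> 2" and delta: "delta \<ge> 0" and R: "R > 0"
  defines "Short \<equiv> {i. i < length xs \<and> tour_edge xs i \<inter> cball z (2 * R) \<noteq> {} \<and> edge_length xs i < R}"
  obtains J N where "dyadic_profile (real K * max c 1 * 37 powr delta) delta (length xs) J N"
    "(\<Sum>i\<in>Short. edge_length xs i / R) \<le> (\<Sum>j\<in>J. N j / 2 ^ j)"
proof -
  define lev where "lev i = dyadic_level R (edge_length xs i)" for i
  define N where "N j = real (card {i\<in>Short. lev i = j})" for j
  have finShort: "finite Short" unfolding Short_def by simp
  have level: "edge_length xs i / R \<le> 1 / 2 ^ lev i" "R / 2 ^ Suc (lev i) < edge_length xs i"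
    if "i \<in> Short" for i
    using dyadic_level_bounds[of "edge_length xs i" R] edge_length_pos[OF dist len] that
    unfolding Short_def lev_def by auto
  have "(\<Sum>i\<in>Short. edge_length xs i / R) = (\<Sum>j\<in>lev ` Short. \<Sum>i\<in>{i\<in>Short. lev i = j}. edge_length xs i / R)"
    by (rule sum.image_gen[OF finShort])
  also have "\<dots> \<le> (\<Sum>j\<in>lev ` Short. N j / 2 ^ j)"
  proof (rule sum_mono)
    fix j
    have "(\<Sum>i\<in>{i\<in>Short. lev i = j}. edge_length xs i / R) \<le> (\<Sum>i\<in>{i\<in>Short. lev i = j}. 1 / 2 ^ j)"
      using level by (intro sum_mono) auto
    then show "(\<Sum>i\<in>{i\<in>Short. lev i = j}. edge_length xs i / R) \<le> N j / 2 ^ j"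
      unfolding N_def by simp
  qed
  finally have sum_le: "(\<Sum>i\<in>Short. edge_length xs i / R) \<le> (\<Sum>j\<in>lev ` Short. N j / 2 ^ j)" .
  have "N j \<le> real (length xs)" for j
  proof -
    have "{i\<in>Short. lev i = j} \<subseteq> {..<length xs}" unfolding Short_def by auto
    then show ?thesis unfolding N_def by (metis card_lessThan card_mono finite_lessThan of_nat_le_iff)
  qed
  moreover have "N j \<le> real K * max c 1 * 37 powr delta * (2 ^ j) powr delta" for j
  proof -
    have "{i\<in>Short. lev i = j} \<subseteq> {i. i < length xs \<and> tour_edge xs i \<inter> cball z (2 * R) \<noteq> {}
            \<and> R / 2 ^ Suc j < edge_length xs i \<and> edge_length xs i < R}"
      using level unfolding Short_def by auto
    then have "N j \<le> real (card {i. i < length xs \<and> tour_edge xs i \<inter> cball z (2 * R) \<noteq> {}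
            \<and> R / 2 ^ Suc j < edge_length xs i \<and> edge_length xs i < R})"
      unfolding N_def by (intro of_nat_mono card_mono) auto
    then show ?thesis using edges_at_scale_count[OF pack fb fin P delta R, of z j] by linarith
  qed
  ultimately have "dyadic_profile (real K * max c 1 * 37 powr delta) delta (length xs) (lev ` Short) N"
    unfolding dyadic_profile_def N_def using finShort by auto
  then show ?thesis using that sum_le by blast
qed

lemma sep_bound_lower_bound:
  obtains s where "s > 0" "\<And>n. n \<ge> 3 \<Longrightarrow> sep_bound delta n \<ge> s"
proof -
  define s where "s = (if delta > 1 then 1 else if delta = 1 then ln 3 else 1 / (2 powr (1 - delta) - 1))"
  have "s > 0" unfolding s_def by auto
  moreover have "sep_bound delta n \<ge> s" if "n \<ge> 3" for n
    unfolding s_def sep_bound_def using that by (auto intro: ge_one_powr_ge_zero)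
  ultimately show ?thesis using that by blast
qed

lemma optimal_tour_sphere_crossings:
  fixes xs :: "'a::euclidean_space list" and z :: 'a
  assumes opt: "optimal_tour P xs" and fin: "finite P" and fb: "fractal_bound delta c P"
    and delta: "delta \<ge> 0" and R: "R > 0" and len: "length xs \<ge> 2"
    and pack: "\<And>z r. r > 0 \<Longrightarrow>
      card {i. i < length xs \<and> edge_length xs i > 5 * r \<and> tour_edge xs i \<inter> cball z r \<noteq> {}} \<le> Kp"
    and cover: "\<And>(z::'a) r. r > 0 \<Longrightarrow>
      \<exists>F. finite F \<and> card F \<le> Kc \<and> cball z r \<subseteq> (\<Union>f\<in>F. cball f ((1/12) * r))"
  obtains r J N where "R \<le> r" "r < 2 * R"
    "dyadic_profile (real Kp * max c 1 * 37 powr delta) delta (length xs) J N"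
    "real (card {i. i < length xs \<and> tour_edge xs i \<inter> sphere z r \<noteq> {}})
       \<le> real Kc * real Kp + (\<Sum>j\<in>J. N j / 2 ^ j) + 1"
proof -
  have dist: "distinct xs" and P: "set xs = P" using opt unfolding optimal_tour_def tsp_tour_def by auto
  let ?Long = "{i. i < length xs \<and> tour_edge xs i \<inter> cball z (2 * R) \<noteq> {} \<and> edge_length xs i \<ge> R}"
  let ?Short = "{i. i < length xs \<and> tour_edge xs i \<inter> cball z (2 * R) \<noteq> {} \<and> edge_length xs i < R}"
  have "length xs > 0" using len by linarith
  note sparse = exists_sparse_sphere[OF this R, of "\<lambda>i. xs ! i" "\<lambda>i. xs ! (Suc i mod length xs)" z]
  obtain r where r: "R \<le> r" "r < 2 * R"
    "real (card {i. i < length xs \<and> tour_edge xs i \<inter> sphere z r \<noteq> {}})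
       \<le> real (card ?Long) + (\<Sum>i\<in>?Short. edge_length xs i / R) + 1"
    by (rule sparse[folded tour_edge_def edge_length_def])
  obtain F where F: "finite F" "card F \<le> Kc" "cball z (2 * R) \<subseteq> (\<Union>f\<in>F. cball f ((1/12) * (2 * R)))"
    using cover[of "2 * R" z] R by auto
  have "card ?Long \<le> Kc * Kp" using long_edges_near_ball_count[OF pack F R] .
  then have long: "real (card ?Long) \<le> real Kc * real Kp" by (simp only: of_nat_le_iff flip: of_nat_mult)
  obtain J N where "dyadic_profile (real Kp * max c 1 * 37 powr delta) delta (length xs) J N"
    and "(\<Sum>i\<in>?Short. edge_length xs i / R) \<le> (\<Sum>j\<in>J. N j / 2 ^ j)"
    by (rule short_edges_dyadic_profile[OF pack fb fin P dist len delta R])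
  then show ?thesis using that r long by fastforce
qed

lemma optimal_tour_sparse_sphere:
  fixes delta c :: real
  assumes delta: "delta > 0"
  obtains B N0 where "\<And>(P::'a::euclidean_space set) xs z R. finite P \<Longrightarrow> card P \<ge> N0 \<Longrightarrow>
      fractal_bound delta c P \<Longrightarrow> optimal_tour P xs \<Longrightarrow> R > 0 \<Longrightarrow>
      \<exists>r. R \<le> r \<and> r < 2 * R
        \<and> real (card {i. i < length xs \<and> tour_edge xs i \<inter> sphere z r \<noteq> {}}) \<le> B * sep_bound delta (card P)"
proof -
  obtain Kp :: nat where pack: "\<And>(P::'a set) xs z r. optimal_tour P xs \<Longrightarrow> r > 0 \<Longrightarrow>
      card {i. i < length xs \<and> edge_length xs i > 5 * r \<and> tour_edge xs i \<inter> cball z r \<noteq> {}} \<le> Kp"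
    by (rule optimal_tour_long_edges_near_ball) blast
  obtain Kc :: nat where cover: "\<And>(z::'a) r. r > 0 \<Longrightarrow>
      \<exists>F. finite F \<and> card F \<le> Kc \<and> cball z r \<subseteq> (\<Union>f\<in>F. cball f ((1/12) * r))"
    using uniform_cball_cover[of "1/12"] by auto
  define A where "A = real Kp * max c 1 * 37 powr delta + 1"
  have A: "A \<ge> 1" unfolding A_def by simp
  obtain Cs where Cs: "\<And>n J N. real n \<ge> A \<Longrightarrow> n \<ge> 3 \<Longrightarrow> dyadic_profile A delta n J N \<Longrightarrow>
      (\<Sum>j\<in>J. N j / 2 ^ j) \<le> Cs * sep_bound delta n"
    by (rule dyadic_sum_le_sep_bound[OF delta A]) blast
  obtain s where s: "s > 0" "\<And>n. n \<ge> 3 \<Longrightarrow> sep_bound delta n \<ge> s"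
    by (rule sep_bound_lower_bound[of delta]) blast
  define B where "B = Cs + (real Kc * real Kp + 1) / s"
  have "\<exists>r. R \<le> r \<and> r < 2 * R
        \<and> real (card {i. i < length xs \<and> tour_edge xs i \<inter> sphere z r \<noteq> {}}) \<le> B * sep_bound delta (card P)"
    if fin: "finite P" and big: "card P \<ge> nat \<lceil>A\<rceil> + 3" and fb: "fractal_bound delta c P"
      and opt: "optimal_tour P xs" and R: "R > 0" for P :: "'a set" and xs z R
  proof -
    have "length xs = card P" using opt distinct_card unfolding optimal_tour_def tsp_tour_def by metis
    then have n3: "length xs \<ge> 3" and nA: "real (length xs) \<ge> A" and n: "length xs = card P"
      using big by linarith+
    obtain r J N where r: "R \<le> r" "r < 2 * R"
      and prof: "dyadic_profile (real Kp * max c 1 * 37 powr delta) delta (length xs) J N"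
      and crossings: "real (card {i. i < length xs \<and> tour_edge xs i \<inter> sphere z r \<noteq> {}})
         \<le> real Kc * real Kp + (\<Sum>j\<in>J. N j / 2 ^ j) + 1"
      by (rule optimal_tour_sphere_crossings[OF opt fin fb _ R _ pack[OF opt] cover])
        (use delta n3 in simp_all)
    have "dyadic_profile A delta (length xs) J N" using dyadic_profile_mono[OF prof] unfolding A_def by simp
    then have "(\<Sum>j\<in>J. N j / 2 ^ j) \<le> Cs * sep_bound delta (length xs)" by (rule Cs[OF nA n3])
    moreover have "(real Kc * real Kp + 1) / s * s \<le> (real Kc * real Kp + 1) / s * sep_bound delta (length xs)"
      using s n3 by (intro mult_left_mono) auto
    then have "real Kc * real Kp + 1 \<le> (real Kc * real Kp + 1) / s * sep_bound delta (length xs)"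
      using s(1) by simp
    ultimately have "real (card {i. i < length xs \<and> tour_edge xs i \<inter> sphere z r \<noteq> {}})
        \<le> B * sep_bound delta (card P)"
      using crossings unfolding B_def n[symmetric] distrib_right by linarith
    then show ?thesis using r by blast
  qed
  then show ?thesis using that by blast
qed

lemma balanced_sphere_sides:
  fixes P :: "'a::metric_space set" and K :: nat
  assumes fin: "finite P" and K: "K \<ge> 2"
    and inner: "real (card (P \<inter> cball z R)) \<ge> real (card P) / K"
    and outer: "real (card (P \<inter> cball z (2 * R))) \<le> real (card P) / 2"
    and r: "R \<le> r" "r < 2 * R"
  shows "real (card (P \<inter> ball z r)) \<le> (1 - 1 / K) * real (card P)"
    and "real (card {p\<in>P. dist z p > r}) \<le> (1 - 1 / K) * real (card P)"
proof -
  have "card (P \<inter> ball z r) \<le> card (P \<inter> cball z (2 * R))"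
    using fin r by (intro card_mono) auto
  then have "real (card (P \<inter> ball z r)) \<le> real (card P) / 2" using outer by linarith
  also have "\<dots> \<le> (1 - 1 / K) * real (card P)"
  proof -
    have "1 / 2 \<le> 1 - 1 / real K" using K by (simp add: field_simps)
    then show ?thesis using mult_right_mono[of "1 / 2" "1 - 1 / real K" "real (card P)"] by simp
  qed
  finally show "real (card (P \<inter> ball z r)) \<le> (1 - 1 / K) * real (card P)" .
  have "{p\<in>P. dist z p > r} \<subseteq> P - P \<inter> cball z R" using r by auto
  then have "card {p\<in>P. dist z p > r} \<le> card (P - P \<inter> cball z R)" using fin by (intro card_mono) auto
  also have "\<dots> = card P - card (P \<inter> cball z R)" using fin by (simp add: card_Diff_subset)
  moreover have "card (P \<inter> cball z R) \<le> card P" using fin by (intro card_mono) auto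
  ultimately have "real (card {p\<in>P. dist z p > r}) \<le> real (card P) - real (card (P \<inter> cball z R))"
    by linarith
  also have "\<dots> \<le> (1 - 1 / K) * real (card P)" using inner by (simp add: algebra_simps)
  finally show "real (card {p\<in>P. dist z p > r}) \<le> (1 - 1 / K) * real (card P)" .
qed

lemma optimal_tour_separating_sphere:
  fixes delta c :: real
  assumes delta: "delta > 0"
  shows "\<exists>K N0 B. K \<ge> (2::nat) \<and> (\<forall>P :: 'a::euclidean_space set. \<forall>xs.
           finite P \<longrightarrow> card P \<ge> N0 \<longrightarrow> fractal_bound delta c P \<longrightarrow> optimal_tour P xs \<longrightarrow>
           (\<exists>z r. r > 0
              \<and> real (card (P \<inter> ball z r)) \<le> (1 - 1 / real K) * real (card P)
              \<and> real (card {p\<in>P. dist z p > r}) \<le> (1 - 1 / real K) * real (card P)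
              \<and> real (card {i. i < length xs \<and> tour_edge xs i \<inter> sphere z r \<noteq> {}})
                  \<le> B * sep_bound delta (card P)))"
proof -
  obtain K :: nat where K: "K \<ge> 2" and balanced: "\<And>P::'a set. finite P \<Longrightarrow> card P > K \<Longrightarrow>
      fractal_bound delta c P \<Longrightarrow> \<exists>z R. R > 0 \<and> real (card (P \<inter> cball z R)) \<ge> real (card P) / K
        \<and> real (card (P \<inter> cball z (2 * R))) \<le> real (card P) / 2"
    by (rule fractal_balanced_ball[of delta c]) blast
  obtain B N0 where sparse: "\<And>(P::'a set) xs z R. finite P \<Longrightarrow> card P \<ge> N0 \<Longrightarrow>
      fractal_bound delta c P \<Longrightarrow> optimal_tour P xs \<Longrightarrow> R > 0 \<Longrightarrow>
      \<exists>r. R \<le> r \<and> r < 2 * R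
        \<and> real (card {i. i < length xs \<and> tour_edge xs i \<inter> sphere z r \<noteq> {}}) \<le> B * sep_bound delta (card P)"
    by (rule optimal_tour_sparse_sphere[OF delta]) blast
  have "\<exists>z r. r > 0
        \<and> real (card (P \<inter> ball z r)) \<le> (1 - 1 / real K) * real (card P)
        \<and> real (card {p\<in>P. dist z p > r}) \<le> (1 - 1 / real K) * real (card P)
        \<and> real (card {i. i < length xs \<and> tour_edge xs i \<inter> sphere z r \<noteq> {}}) \<le> B * sep_bound delta (card P)"
    if P: "finite P" "card P \<ge> max N0 (Suc K)" "fractal_bound delta c P" "optimal_tour P xs"
    for P :: "'a set" and xs
  proof -
    have "card P > K" "card P \<ge> N0" using P(2) by simp_all
    then obtain z R where zR: "R > 0" "real (card (P \<inter> cball z R)) \<ge> real (card P) / K"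
        "real (card (P \<inter> cball z (2 * R))) \<le> real (card P) / 2"
      using balanced[OF P(1) _ P(3)] by blast
    obtain r where r: "R \<le> r" "r < 2 * R"
        "real (card {i. i < length xs \<and> tour_edge xs i \<inter> sphere z r \<noteq> {}}) \<le> B * sep_bound delta (card P)"
      using sparse[OF P(1) \<open>card P \<ge> N0\<close> P(3,4) zR(1)] by blast
    moreover have "r > 0" using zR(1) r(1) by simp
    ultimately show ?thesis using balanced_sphere_sides[OF P(1) K zR(2,3) r(1,2)] by blast
  qed
  then show ?thesis using K by blast
qed

theorem theorem4:
  fixes delta c :: real
  assumes "DIM('a::euclidean_space) \<ge> 2"
    and "0 < delta" and "delta \<le> real DIM('a)"
  shows "\<exists>\<alpha>>0. \<exists>N0 B. \<forall>P :: 'a set. \<forall>xs.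
           finite P \<longrightarrow> card P \<ge> N0 \<longrightarrow> fractal_bound delta c P \<longrightarrow> optimal_tour P xs \<longrightarrow>
           (\<exists>z r. r > 0
              \<and> real (card (P \<inter> ball z r)) \<le> (1 - \<alpha>) * real (card P)
              \<and> real (card {p\<in>P. dist z p > r}) \<le> (1 - \<alpha>) * real (card P)
              \<and> real (card {i. i < length xs \<and> tour_edge xs i \<inter> sphere z r \<noteq> {}})
                  \<le> B * sep_bound delta (card P))"
proof -
  obtain K :: nat and N0 B where "K \<ge> 2" and separating: "\<forall>P :: 'a set. \<forall>xs.
      finite P \<longrightarrow> card P \<ge> N0 \<longrightarrow> fractal_bound delta c P \<longrightarrow> optimal_tour P xs \<longrightarrow>
      (\<exists>z r. r > 0
         \<and> real (card (P \<inter> ball z r)) \<le> (1 - 1 / real K) * real (card P)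
         \<and> real (card {p\<in>P. dist z p > r}) \<le> (1 - 1 / real K) * real (card P)
         \<and> real (card {i. i < length xs \<and> tour_edge xs i \<inter> sphere z r \<noteq> {}})
             \<le> B * sep_bound delta (card P))"
    using optimal_tour_separating_sphere[OF assms(2), of c] by blast
  moreover have "1 / real K > 0" using \<open>K \<ge> 2\<close> by simp
  ultimately show ?thesis by blast
qed

end
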